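(* Let $x=\prod_{n\ge1}01^n=0\,1\,0\,11\,0\,111\,0\,1111\cdots\in\{0,1\}^\omega$, and define $\varphi:\{0,1\}^+\to\{0,1\}$ by $\varphi(u)=0$ if $u\in\mathrm{Fact}(x)$ and $\varphi(u)=1$ otherwise. Then no suffix of $x$ admits a $\varphi$-ultra monochromatic factorization.
   Context: $\mathrm{Fact}(x)$ is the set of non-empty finite factors of $x$. A factorization $x'=V_0V_1V_2\cdots$ with all $V_i$ non-empty is $\varphi$-ultra monochromatic if there is a color $c$ such that for all $k\ge1$, all $0\le n_1<\cdots<n_k$ and all permutations $\sigma$ of $\{1,\dots,k\}$, $\varphi(V_{n_{\sigma(1)}}\cdots V_{n_{\sigma(k)}})=c$. *)

theory Defs
  imports "HOL-Combinatorics.Permutations"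
begin

text \<open>Infinite binary words are functions nat => bool (False = 0, True = 1);
finite words are lists.\<close>

text \<open>Block n (n >= 1) of x is 0 1^n, of length n+1, starting at position
(n-1)(n+2)/2. Hence x i = 0 exactly at these block starts.\<close>
definition xword :: "nat \<Rightarrow> bool" where
  "xword i = (\<not> (\<exists>n\<ge>1. i = (n - 1) * (n + 2) div 2))"

definition prefix_word :: "(nat \<Rightarrow> bool) \<Rightarrow> nat \<Rightarrow> bool list" where
  "prefix_word w l = map w [0..<l]"

definition Fact :: "(nat \<Rightarrow> bool) \<Rightarrow> bool list set" where
  "Fact w = {u. u \<noteq> [] \<and> (\<exists>i. u = map (\<lambda>j. w (i + j)) [0..<length u])}"

definition phi :: "bool list \<Rightarrow> bool" where
  "phi u = (u \<notin> Fact xword)"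

definition suffix_from :: "(nat \<Rightarrow> bool) \<Rightarrow> nat \<Rightarrow> nat \<Rightarrow> bool" where
  "suffix_from w m = (\<lambda>k. w (m + k))"

definition is_factorization :: "(nat \<Rightarrow> bool) \<Rightarrow> (nat \<Rightarrow> bool list) \<Rightarrow> bool" where
  "is_factorization w V \<longleftrightarrow>
     (\<forall>n. V n \<noteq> []) \<and>
     (\<forall>n j. j < length (V n) \<longrightarrow> w ((\<Sum>i<n. length (V i)) + j) = V n ! j)"

definition ultra_mono :: "(bool list \<Rightarrow> 'c) \<Rightarrow> (nat \<Rightarrow> bool list) \<Rightarrow> bool" where
  "ultra_mono f V \<longleftrightarrow> (\<exists>c. \<forall>k (ns :: nat \<Rightarrow> nat) \<sigma>.
      k \<ge> 1 \<longrightarrow> (\<forall>i j. i < j \<longrightarrow> j < k \<longrightarrow> ns i < ns j) \<longrightarrow> \<sigma> permutes {..<k} \<longrightarrow>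
      f (concat (map (\<lambda>i. V (ns (\<sigma> i))) [0..<k])) = c)"

end

theory Submission
  imports Defs
begin

text \<open>The zeros of x sit at the positions zero_pos k, and the run of ones following the zero at
zero_pos k has length k + 1, so the runs of ones in x get strictly longer from left to right.
The colour of a monochromatic factorization is that of its first block, a factor of x, so every
product of blocks in any order is a factor of x. Infinitely many blocks contain a 0; pick three of
them, X, Y, Z. In XYZ the run of ones across the junction X|Y precedes the one across Y|Z, hence is
shorter. Adding these inequalities for the three rotations XYZ, YZX, ZXY gives s < s.\<close>

fun zero_pos :: "nat \<Rightarrow> nat" where
  "zero_pos 0 = 0"
| "zero_pos (Suc k) = zero_pos k + k + 2"

lemma two_zero_pos: "2 * zero_pos k = k * (k + 3)"
  by (induction k) (auto simp: algebra_simps)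

lemma zero_pos_ge: "k \<le> zero_pos k"
  by (induction k) auto

lemma strict_mono_zero_pos: "strict_mono zero_pos"
  by (rule strict_mono_Suc_iff[THEN iffD2]) simp

lemma xword_eq_False_iff: "\<not> xword i \<longleftrightarrow> i \<in> range zero_pos"
proof
  assume "\<not> xword i"
  then obtain n where "n \<ge> 1" "i = (n - 1) * (n + 2) div 2"
    unfolding xword_def by auto
  moreover from \<open>n \<ge> 1\<close> obtain k where "n = Suc k"
    using not0_implies_Suc by fastforce
  ultimately have "i = k * (k + 3) div 2"
    by (simp add: algebra_simps)
  then have "i = zero_pos k"
    using two_zero_pos[of k] by simp
  then show "i \<in> range zero_pos" by blast
next
  assume "i \<in> range zero_pos"
  then obtain k where "i = zero_pos k" by blast
  then have "i = (Suc k - 1) * (Suc k + 2) div 2"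
    using two_zero_pos[of k] by (simp add: algebra_simps)
  then show "\<not> xword i"
    unfolding xword_def by (metis le_add1 plus_1_eq_Suc)
qed

definition ones_run :: "(nat \<Rightarrow> bool) \<Rightarrow> nat \<Rightarrow> nat \<Rightarrow> bool" where
  "ones_run w p a \<longleftrightarrow> \<not> w p \<and> \<not> w (p + a + 1) \<and> (\<forall>t. 0 < t \<and> t \<le> a \<longrightarrow> w (p + t))"

lemma ones_run_xword:
  assumes "ones_run xword (zero_pos k) a"
  shows "a = Suc k"
proof -
  obtain k' where k': "zero_pos k + a + 1 = zero_pos k'"
    using assms xword_eq_False_iff unfolding ones_run_def by blast
  then have "zero_pos k < zero_pos k'"
    by simp
  then have "k < k'"
    using strict_mono_less[OF strict_mono_zero_pos] by blast
  have "k' = Suc k"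
  proof (rule ccontr)
    assume "k' \<noteq> Suc k"
    with \<open>k < k'\<close> have "Suc k < k'"
      by simp
    then have "zero_pos (Suc k) < zero_pos k'"
      by (rule strict_monoD[OF strict_mono_zero_pos])
    then have "k + 2 \<le> a"
      using k' by simp
    then have "xword (zero_pos k + (k + 2))"
      using assms unfolding ones_run_def by (metis zero_less_Suc add_2_eq_Suc')
    moreover have "zero_pos k + (k + 2) = zero_pos (Suc k)"
      by simp
    ultimately show False
      using xword_eq_False_iff by (metis rangeI)
  qed
  with k' show "a = Suc k" by simp
qed

lemma ones_run_xword_increasing:
  assumes "ones_run xword p a" "ones_run xword p' a'" "p < p'"
  shows "a < a'"
proof -
  obtain k where k: "p = zero_pos k"
    using assms(1) xword_eq_False_iff unfolding ones_run_def by blast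
  obtain k' where k': "p' = zero_pos k'"
    using assms(2) xword_eq_False_iff unfolding ones_run_def by blast
  have "k < k'"
    using assms(3) k k' strict_mono_less[OF strict_mono_zero_pos] by blast
  moreover have "a = Suc k" "a' = Suc k'"
    using assms(1,2) k k' ones_run_xword by blast+
  ultimately show ?thesis
    by simp
qed

lemma ones_run_in_factor:
  assumes u: "u = map (\<lambda>j. w (i + j)) [0..<length u]"
    and split: "u = P @ False # replicate a True @ False # Q"
  shows "ones_run w (i + length P) a"
proof -
  have w_nth: "w (i + t) = u ! t" if "t < length u" for t
    using that by (subst u) simp
  have len: "length u = length P + a + 2 + length Q"
    using split by simp
  have "u ! (length P + t) = (0 < t \<and> t \<le> a)" if "t \<le> a + 1" for t
    using that unfolding split by (cases t) (auto simp: nth_append)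
  then have run: "w (i + length P + t) = (0 < t \<and> t \<le> a)" if "t \<le> a + 1" for t
    using that len w_nth[of "length P + t"] by (simp add: add.assoc)
  show ?thesis
    unfolding ones_run_def using run[of 0] run[of "a + 1"] run by auto
qed

lemma Fact_xword_runs_increasing:
  assumes "u \<in> Fact xword"
    and "u = P @ False # replicate a True @ False # Q"
    and "u = P' @ False # replicate a' True @ False # Q'"
    and "length P < length P'"
  shows "a < a'"
proof -
  obtain i where u: "u = map (\<lambda>j. xword (i + j)) [0..<length u]"
    using assms(1) unfolding Fact_def by blast
  have "i + length P < i + length P'"
    using assms(4) by simp
  then show ?thesis
    using ones_run_xword_increasing ones_run_in_factor[OF u assms(2)]
      ones_run_in_factor[OF u assms(3)] by blast
qed

definition lead_ones :: "bool list \<Rightarrow> nat" where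
  "lead_ones u = length (takeWhile id u)"

definition trail_ones :: "bool list \<Rightarrow> nat" where
  "trail_ones u = lead_ones (rev u)"

lemma lead_ones_split:
  assumes "False \<in> set u"
  obtains v where "u = replicate (lead_ones u) True @ False # v"
proof -
  have ones: "takeWhile id u = replicate (lead_ones u) True"
    unfolding lead_ones_def by (rule replicate_eqI) (auto dest: set_takeWhileD)
  have "dropWhile id u \<noteq> []"
    using assms by auto
  then obtain b v where bv: "dropWhile id u = b # v"
    by (cases "dropWhile id u") auto
  then have "b = False"
    using hd_dropWhile[of id u] by simp
  then have "u = replicate (lead_ones u) True @ False # v"
    using takeWhile_dropWhile_id[of id u] ones bv by simp
  then show ?thesis
    by (rule that)
qed

lemma trail_ones_split:
  assumes "False \<in> set u"
  obtains v where "u = v @ False # replicate (trail_ones u) True"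
proof -
  from assms have "False \<in> set (rev u)"
    by simp
  then obtain v where "rev u = replicate (trail_ones u) True @ False # v"
    unfolding trail_ones_def by (rule lead_ones_split)
  then have "u = rev v @ False # replicate (trail_ones u) True"
    by (metis rev_rev_ident rev.simps(2) rev_append rev_replicate append_assoc append_Cons append_Nil)
  then show ?thesis
    by (rule that)
qed

lemma Fact_xword_junction_runs_increasing:
  assumes "X @ Y @ Z \<in> Fact xword" "False \<in> set X" "False \<in> set Y" "False \<in> set Z"
  shows "trail_ones X + lead_ones Y < trail_ones Y + lead_ones Z"
proof -
  obtain X' where X: "X = X' @ False # replicate (trail_ones X) True"
    using assms(2) by (rule trail_ones_split)
  obtain Y' where Y': "Y = replicate (lead_ones Y) True @ False # Y'"
    using assms(3) by (rule lead_ones_split)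
  obtain Y'' where Y'': "Y = Y'' @ False # replicate (trail_ones Y) True"
    using assms(3) by (rule trail_ones_split)
  obtain Z' where Z: "Z = replicate (lead_ones Z) True @ False # Z'"
    using assms(4) by (rule lead_ones_split)
  have "X @ Y @ Z = X' @ False # replicate (trail_ones X + lead_ones Y) True @ False # Y' @ Z"
    by (subst X, subst Y') (simp add: replicate_add)
  moreover have "X @ Y @ Z = (X @ Y'') @ False # replicate (trail_ones Y + lead_ones Z) True @ False # Z'"
    by (subst Y'', subst Z) (simp add: replicate_add)
  moreover have "length X' < length (X @ Y'')"
    using arg_cong[OF X, of length] by simp
  ultimately show ?thesis
    by (rule Fact_xword_runs_increasing[OF assms(1)])
qed

lemma factorization_block_in_Fact:
  assumes "is_factorization (suffix_from w m) V"
  shows "V n \<in> Fact w"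
proof -
  let ?i = "m + (\<Sum>i<n. length (V i))"
  have "V n = map (\<lambda>j. w (?i + j)) [0..<length (V n)]"
    using assms unfolding is_factorization_def suffix_from_def
    by (intro nth_equalityI) (simp_all add: add.assoc)
  moreover have "V n \<noteq> []"
    using assms unfolding is_factorization_def by blast
  ultimately show ?thesis
    unfolding Fact_def by blast
qed

lemma factorization_covers:
  assumes fac: "is_factorization w V" and p: "(\<Sum>i<N. length (V i)) \<le> p"
  obtains n where "N \<le> n" "w p \<in> set (V n)"
proof -
  define off where "off n = (\<Sum>i<n. length (V i))" for n
  have off_ge: "n \<le> off n" for n
  proof -
    have "length (V i) \<ge> 1" for i
      using fac unfolding is_factorization_def by (simp add: Suc_leI)
    then have "(\<Sum>i<n. 1) \<le> off n"
      unfolding off_def by (intro sum_mono) simp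
    then show ?thesis by simp
  qed
  have "p < off (N + Suc p)"
    using off_ge[of "N + Suc p"] by simp
  moreover have "\<not> p < off (N + 0)"
    using p unfolding off_def by simp
  ultimately obtain k where k: "\<not> p < off (N + k)" "p < off (N + Suc k)"
    using ex_least_nat_less[of "\<lambda>k. p < off (N + k)"] by blast
  define j where "j = p - off (N + k)"
  have j: "j < length (V (N + k))" and "p = off (N + k) + j"
    using k unfolding j_def off_def by simp_all
  then have "w p = V (N + k) ! j"
    using fac unfolding is_factorization_def off_def by simp
  with j show ?thesis
    using that[of "N + k"] by simp
qed

lemma xword_factorization_zero_blocks:
  assumes "is_factorization (suffix_from xword m) V"
  obtains n where "N \<le> n" "False \<in> set (V n)"
proof -
  let ?q = "m + (\<Sum>i<N. length (V i))"
  have "?q \<le> zero_pos ?q"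
    by (rule zero_pos_ge)
  then have zero: "suffix_from xword m (zero_pos ?q - m) = False"
    using xword_eq_False_iff unfolding suffix_from_def by simp
  have "(\<Sum>i<N. length (V i)) \<le> zero_pos ?q - m"
    using \<open>?q \<le> zero_pos ?q\<close> by simp
  then obtain n where "N \<le> n" "suffix_from xword m (zero_pos ?q - m) \<in> set (V n)"
    by (rule factorization_covers[OF assms])
  with zero show ?thesis
    using that by simp
qed

lemma rotation_permutes:
  "(\<lambda>i::nat. if i < k then (i + r) mod k else i) permutes {..<k}"
proof (rule bij_imp_permutes)
  let ?f = "\<lambda>i. if i < k then (i + r) mod k else i"
  have cancel: "x = y" if "x < k" "y < k" "(x + r) mod k = (y + r) mod k" for x y
  proof -
    have "x mod k = y mod k"
      using that(3) by (simp add: nat_mod_eq_iff)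
    with that(1,2) show ?thesis
      by simp
  qed
  have inj: "inj_on ?f {..<k}"
    by (auto simp: inj_on_def intro: cancel)
  then have "?f ` {..<k} = {..<k}"
    by (intro endo_inj_surj) auto
  with inj show "bij_betw ?f {..<k} {..<k}"
    unfolding bij_betw_def by blast
qed simp

lemma ultra_mono_colour:
  assumes "ultra_mono f V" "k \<ge> 1" "\<forall>i j. i < j \<longrightarrow> j < k \<longrightarrow> ns i < ns j" "\<sigma> permutes {..<k}"
  shows "f (concat (map (\<lambda>i. V (ns (\<sigma> i))) [0..<k])) = f (V 0)"
proof -
  obtain c where c: "\<And>k ns \<sigma>. k \<ge> 1 \<Longrightarrow> \<forall>i j. i < j \<longrightarrow> j < k \<longrightarrow> ns i < ns j \<Longrightarrow>
      \<sigma> permutes {..<k} \<Longrightarrow> f (concat (map (\<lambda>i. V (ns (\<sigma> i))) [0..<k])) = c"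
    using assms(1) unfolding ultra_mono_def by blast
  have "f (V 0) = c"
    using c[of 1 "\<lambda>_. 0" id] by simp
  with c assms(2-4) show ?thesis
    by simp
qed

lemma ultra_mono_rotations:
  assumes "ultra_mono f V" "a < b" "b < d"
  shows "f (V a @ V b @ V d) = f (V 0)" "f (V b @ V d @ V a) = f (V 0)"
    "f (V d @ V a @ V b) = f (V 0)"
proof -
  let ?ns = "\<lambda>i::nat. [a, b, d] ! i"
  have ns: "\<forall>i j. i < j \<longrightarrow> j < 3 \<longrightarrow> ?ns i < ?ns j"
    using assms(2,3) by (auto simp: less_Suc_eq numeral_3_eq_3)
  have upt3: "[0..<3] = [0, 1, 2::nat]"
    by (simp add: upt_rec)
  show "f (V a @ V b @ V d) = f (V 0)" "f (V b @ V d @ V a) = f (V 0)"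
    "f (V d @ V a @ V b) = f (V 0)"
    using ultra_mono_colour[OF assms(1) _ ns rotation_permutes, of 0]
      ultra_mono_colour[OF assms(1) _ ns rotation_permutes, of 1]
      ultra_mono_colour[OF assms(1) _ ns rotation_permutes, of 2]
    by (simp_all add: upt3)
qed

theorem mainTheorem13:
  shows "\<not> (\<exists>m V. is_factorization (suffix_from xword m) V \<and> ultra_mono phi V)"
proof
  assume "\<exists>m V. is_factorization (suffix_from xword m) V \<and> ultra_mono phi V"
  then obtain m V where fac: "is_factorization (suffix_from xword m) V" and um: "ultra_mono phi V"
    by blast
  obtain a where a: "False \<in> set (V a)"
    using xword_factorization_zero_blocks[OF fac, of 0] by blast
  obtain b where b: "Suc a \<le> b" "False \<in> set (V b)"
    by (rule xword_factorization_zero_blocks[OF fac])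
  obtain d where d: "Suc b \<le> d" "False \<in> set (V d)"
    by (rule xword_factorization_zero_blocks[OF fac])
  have "phi (V 0) = False"
    using factorization_block_in_Fact[OF fac] unfolding phi_def by blast
  then have abd: "V a @ V b @ V d \<in> Fact xword" and bda: "V b @ V d @ V a \<in> Fact xword"
      and dab: "V d @ V a @ V b \<in> Fact xword"
    using ultra_mono_rotations[OF um, of a b d] b d unfolding phi_def by auto
  show False
    using Fact_xword_junction_runs_increasing[OF abd a b(2) d(2)]
      Fact_xword_junction_runs_increasing[OF bda b(2) d(2) a]
      Fact_xword_junction_runs_increasing[OF dab d(2) a b(2)]
    by linarith
qed

end
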